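(* Let $n_1,n_2,n_3$ be integers with $3\le n_1,n_2\le n_3$ and $3\max(n_1,n_2)\le 2n_3\le n_1n_2$. Then the Middle Cone Construction described below can be carried out (in particular, when $n_2$ is odd and $k\le1$, a left column with first coordinate not in $\{1,2,n_1\}$ and second coordinate $1$ exists), and for every set $W$ it produces, in the landmark graph $\mathcal{G}(W)$ every hyperedge of color $3$ has exactly two vertices, and every hyperedge of color $1$ and every hyperedge of color $2$ has at least three vertices.
   Context: $K(\mathbf{n})=K_{n_1}\times K_{n_2}\times K_{n_3}$: vertices are triples $(x_1,x_2,x_3)$, $1\le x_i\le n_i$, adjacent iff they differ in every coordinate. For a vertex set $W$, $W_{i,a}=\{w\in W:w_i=a\}$, and the landmark graph $\mathcal{G}(W)$ is the hypergraph on $W$ whose hyperedges are the nonempty $W_{i,a}$, colored $i$. Multiplicities: write $n_3=qn_1+r$, $0\le r\le n_1-1$. If $r\le n_1-r$, $(\ell_1,\dots,\ell_{n_1})$ is $(q+1,q)$ repeated $r$ times followed by $n_1-2r$ copies of $q$; if $r>n_1-r$, it is $(q+1,q)$ repeated $n_1-r$ times followed by $2r-n_1$ copies of $q+1$. Let $L_i=\sum_{j<i}\ell_j$, so block $i$ consists of columns $c$ with $L_i<c\le L_i+\ell_i$; $s_i=L_i+1$ is the start of block $i$. Middle Cone Construction: $W=W^L\cup W^R$, where $W^L$ (left) and $W^R$ (right) each consist of $n_3$ landmarks indexed by columns $c=1,\dots,n_3$. Left column $c$ in block $i$ is $(i,\,y^L_c,\,c)$; right column $c$ in block $i$ is $(i+1,\,y^R_c,\,c)$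 with $n_1+1$ read as $1$. Even $n_2$, $h=n_2/2$: $y^L_c=((c-1)\bmod h)+1$ and $y^R_c=h+((c-1)\bmod h)+1$. Odd $n_2$, $f=(n_2-1)/2$, $k=\#\{i:\ell_i>f\}$. Choose a set $S$ of "neutral" left columns: if $k\ge2$, $S=\{s_i:\ell_i>f\}$; if $k\le1$, $S=\{1\}$. Set $y^L_c=n_2$ for $c\in S$, and fill the remaining left columns, in increasing order of $c$, with the periodic sequence $1,2,\dots,f,1,2,\dots,f,\dots$. Set $y^R_c=n_2$ for $c\in S+1$, and fill the remaining right columns in increasing order with $f+1,\dots,2f,f+1,\dots,2f,\dots$. If $k\le1$, additionally choose one left landmark of the form $(x,1,z)$ with $x\notin\{1,2,n_1\}$ and change its second coordinate to $n_2$ (any such choice is allowed). *)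

theory Defs
  imports Main
begin

type_synonym vtx = "nat \<times> nat \<times> nat"

text \<open>Vertices of K(n1) x K(n2) x K(n3).\<close>
definition vertices :: "nat \<Rightarrow> nat \<Rightarrow> nat \<Rightarrow> vtx set" where
  "vertices n1 n2 n3 = {1..n1} \<times> {1..n2} \<times> {1..n3}"

definition coord :: "nat \<Rightarrow> vtx \<Rightarrow> nat" where
  "coord i w = (if i = 1 then fst w else if i = 2 then fst (snd w) else snd (snd w))"

definition slice :: "vtx set \<Rightarrow> nat \<Rightarrow> nat \<Rightarrow> vtx set" where
  "slice W i a = {w \<in> W. coord i w = a}"

definition landmark_hyperedges :: "vtx set \<Rightarrow> (nat \<times> vtx set) set" where
  "landmark_hyperedges W =
     {(i, slice W i a) | i a. i \<in> {1,2,3} \<and> slice W i a \<noteq> {}}"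

definition ell :: "nat \<Rightarrow> nat \<Rightarrow> nat \<Rightarrow> nat" where
  "ell n1 n3 i =
     (let q = n3 div n1; r = n3 mod n1 in
      if r \<le> n1 - r then (if i \<le> 2 * r \<and> odd i then q + 1 else q)
      else (if i \<le> 2 * (n1 - r) then (if odd i then q + 1 else q) else q + 1))"

definition Lsum :: "nat \<Rightarrow> nat \<Rightarrow> nat \<Rightarrow> nat" where
  "Lsum n1 n3 i = (\<Sum>j\<in>{1..<i}. ell n1 n3 j)"

definition sstart :: "nat \<Rightarrow> nat \<Rightarrow> nat \<Rightarrow> nat" where
  "sstart n1 n3 i = Lsum n1 n3 i + 1"

definition inblock :: "nat \<Rightarrow> nat \<Rightarrow> nat \<Rightarrow> nat \<Rightarrow> bool" where
  "inblock n1 n3 i c \<longleftrightarrow>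
     1 \<le> i \<and> i \<le> n1 \<and> Lsum n1 n3 i < c \<and> c \<le> Lsum n1 n3 i + ell n1 n3 i"

definition succ1 :: "nat \<Rightarrow> nat \<Rightarrow> nat" where
  "succ1 n1 i = (if i = n1 then 1 else i + 1)"

definition fpar :: "nat \<Rightarrow> nat" where
  "fpar n2 = (n2 - 1) div 2"

definition kcount :: "nat \<Rightarrow> nat \<Rightarrow> nat \<Rightarrow> nat" where
  "kcount n1 n2 n3 = card {i \<in> {1..n1}. ell n1 n3 i > fpar n2}"

definition Sneutral :: "nat \<Rightarrow> nat \<Rightarrow> nat \<Rightarrow> nat set" where
  "Sneutral n1 n2 n3 =
     (if kcount n1 n2 n3 \<ge> 2
      then {sstart n1 n3 i | i. 1 \<le> i \<and> i \<le> n1 \<and> ell n1 n3 i > fpar n2}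
      else {1})"

definition rank_out :: "nat set \<Rightarrow> nat \<Rightarrow> nat" where
  "rank_out X c = card {c' \<in> {1..c}. c' \<notin> X}"

definition yL :: "nat \<Rightarrow> nat \<Rightarrow> nat \<Rightarrow> nat \<Rightarrow> nat" where
  "yL n1 n2 n3 c =
     (if even n2 then (c - 1) mod (n2 div 2) + 1
      else (let S = Sneutral n1 n2 n3; f = fpar n2 in
            if c \<in> S then n2 else (rank_out S c - 1) mod f + 1))"

definition yR :: "nat \<Rightarrow> nat \<Rightarrow> nat \<Rightarrow> nat \<Rightarrow> nat" where
  "yR n1 n2 n3 c =
     (if even n2 then n2 div 2 + (c - 1) mod (n2 div 2) + 1
      else (let S1 = (\<lambda>s. s + 1) ` Sneutral n1 n2 n3; f = fpar n2 in
            if c \<in> S1 then n2 else f + (rank_out S1 c - 1) mod f + 1))"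

definition WLeft :: "nat \<Rightarrow> nat \<Rightarrow> nat \<Rightarrow> vtx set" where
  "WLeft n1 n2 n3 =
     {(i, yL n1 n2 n3 c, c) | i c. c \<in> {1..n3} \<and> inblock n1 n3 i c}"

definition WRight :: "nat \<Rightarrow> nat \<Rightarrow> nat \<Rightarrow> vtx set" where
  "WRight n1 n2 n3 =
     {(succ1 n1 i, yR n1 n2 n3 c, c) | i c. c \<in> {1..n3} \<and> inblock n1 n3 i c}"

definition middle_cone :: "nat \<Rightarrow> nat \<Rightarrow> nat \<Rightarrow> vtx set \<Rightarrow> bool" where
  "middle_cone n1 n2 n3 W \<longleftrightarrow>
     (even n2 \<and> W = WLeft n1 n2 n3 \<union> WRight n1 n2 n3) \<or>
     (odd n2 \<and> kcount n1 n2 n3 \<ge> 2 \<and> W = WLeft n1 n2 n3 \<union> WRight n1 n2 n3) \<or>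
     (odd n2 \<and> kcount n1 n2 n3 \<le> 1 \<and>
       (\<exists>x z. (x, 1, z) \<in> WLeft n1 n2 n3 \<and> x \<notin> {1, 2, n1} \<and>
          W = ((WLeft n1 n2 n3 - {(x, 1, z)}) \<union> {(x, n2, z)}) \<union> WRight n1 n2 n3))"

end

theory Submission
  imports Defs
begin

text \<open>Column \<open>c\<close> in block \<open>i\<close> contributes exactly the left landmark \<open>(i, y\<^sup>L\<^sub>c, c)\<close> and the
  right landmark \<open>(i + 1, y\<^sup>R\<^sub>c, c)\<close>, so every colour-3 hyperedge is a pair. The colour-1
  hyperedge at \<open>x\<close> contains all left landmarks of block \<open>x\<close> and all right landmarks of
  block \<open>x - 1\<close>; two consecutive blocks have at least three columns, because for \<open>q = 1\<close> the
  bound \<open>3 n1 \<le> 2 n3\<close> makes every odd-indexed block long. A colour-2 hyperedge collects the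
  columns where \<open>y\<^sup>L\<close> or \<open>y\<^sup>R\<close> takes a given value. Off the neutral columns the labels run
  periodically with period \<open>f\<close> (or \<open>h\<close>) through at least \<open>3 f\<close> columns, so each label occurs at
  least three times, while the neutral label \<open>n2\<close> sits on at least two left and one right
  column. If \<open>n2\<close> is odd and \<open>k \<le> 1\<close>, column \<open>2 f + 2\<close> carries the left label \<open>1\<close> and lies
  strictly between blocks \<open>2\<close> and \<open>n1\<close>; label \<open>1\<close> then occurs at least four times on the
  left, so relabelling that landmark by \<open>n2\<close> keeps every hyperedge large enough.\<close>

lemma ell_bounds:
  "n3 div n1 \<le> ell n1 n3 i" "ell n1 n3 i \<le> n3 div n1 + 1"
  unfolding ell_def Let_def by auto

lemma Lsum_Suc_Suc: "Lsum n1 n3 (Suc (Suc m)) = Lsum n1 n3 (Suc m) + ell n1 n3 (Suc m)"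
  unfolding Lsum_def by (simp add: sum.atLeastLessThan_Suc)

text \<open>For \<open>r = n3 mod n1\<close>, the number of \<open>i \<le> m\<close> with \<open>ell n1 n3 i = q + 1\<close>.\<close>
definition long_blocks_upto :: "nat \<Rightarrow> nat \<Rightarrow> nat \<Rightarrow> nat" where
  "long_blocks_upto n1 r m =
     (if r \<le> n1 - r then (min m (2 * r) + 1) div 2
      else if m \<le> 2 * (n1 - r) then (m + 1) div 2 else m - (n1 - r))"

lemma Lsum_Suc_eq:
  "Lsum n1 n3 (Suc m) = m * (n3 div n1) + long_blocks_upto n1 (n3 mod n1) m"
proof (induction m)
  case 0
  then show ?case by (simp add: Lsum_def long_blocks_upto_def)
next
  case (Suc m)
  define q where "q = n3 div n1"
  define r where "r = n3 mod n1"
  have ell: "ell n1 n3 (Suc m) =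
      (if r \<le> n1 - r then (if Suc m \<le> 2 * r \<and> odd (Suc m) then q + 1 else q)
       else if Suc m \<le> 2 * (n1 - r) then (if odd (Suc m) then q + 1 else q) else q + 1)"
    unfolding ell_def Let_def q_def r_def by simp
  have "long_blocks_upto n1 r (Suc m) = long_blocks_upto n1 r m +
      (if r \<le> n1 - r then (if Suc m \<le> 2 * r \<and> odd (Suc m) then 1 else 0)
       else if Suc m \<le> 2 * (n1 - r) then (if odd (Suc m) then 1 else 0) else 1)"
    unfolding long_blocks_upto_def by (auto simp: min_def elim!: oddE evenE)
  then show ?case
    using Suc Lsum_Suc_Suc[of n1 n3 m] ell unfolding q_def[symmetric] r_def[symmetric]
    by (auto split: if_splits)
qed

lemma Lsum_total:
  assumes "0 < n1"
  shows "Lsum n1 n3 (Suc n1) = n3"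
proof -
  have "long_blocks_upto n1 (n3 mod n1) n1 = n3 mod n1"
    using assms unfolding long_blocks_upto_def by (auto simp: min_def)
  then show ?thesis using Lsum_Suc_eq[of n1 n3 n1] by (simp add: mult.commute)
qed

lemma Lsum_mono: "i \<le> j \<Longrightarrow> Lsum n1 n3 i \<le> Lsum n1 n3 j"
  unfolding Lsum_def by (rule sum_mono2) auto

lemma Lsum_Suc: "1 \<le> i \<Longrightarrow> Lsum n1 n3 (Suc i) = Lsum n1 n3 i + ell n1 n3 i"
  using Lsum_Suc_Suc[of n1 n3 "i - 1"] by (cases i) auto

lemma inblock_unique:
  assumes "inblock n1 n3 i c" and "inblock n1 n3 j c"
  shows "i = j"
proof -
  have False if "inblock n1 n3 i c" "inblock n1 n3 j c" "i < j" for i j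
  proof -
    have "Lsum n1 n3 (Suc i) \<le> Lsum n1 n3 j" using that by (intro Lsum_mono) auto
    then show False using that Lsum_Suc[of i] unfolding inblock_def by auto
  qed
  then show ?thesis using assms by (metis nat_neq_iff)
qed

lemma inblock_exists_upto:
  "m \<le> n1 \<Longrightarrow> 0 < c \<Longrightarrow> c \<le> Lsum n1 n3 (Suc m) \<Longrightarrow> \<exists>i. inblock n1 n3 i c"
proof (induction m)
  case 0
  then show ?case by (simp add: Lsum_def)
next
  case (Suc m)
  show ?case
  proof (cases "c \<le> Lsum n1 n3 (Suc m)")
    case True
    then show ?thesis using Suc by simp
  next
    case False
    then show ?thesis using Suc.prems Lsum_Suc[of "Suc m"]
      unfolding inblock_def by (intro exI[of _ "Suc m"]) auto
  qed
qed

definition valid_landmarks :: "nat \<Rightarrow> nat \<Rightarrow> nat \<Rightarrow> vtx set \<Rightarrow> bool" where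
  "valid_landmarks n1 n2 n3 W \<longleftrightarrow>
     W \<subseteq> vertices n1 n2 n3 \<and>
     (\<forall>(col, e) \<in> landmark_hyperedges W.
        (col = 3 \<longrightarrow> card e = 2) \<and> (col \<in> {1, 2} \<longrightarrow> finite e \<and> card e \<ge> 3))"

locale block_partition =
  fixes n1 n3 :: nat
  assumes two_le_n1: "2 \<le> n1"
begin

abbreviation "L \<equiv> Lsum n1 n3"
abbreviation "el \<equiv> ell n1 n3"

lemma inblock_exists: "1 \<le> c \<Longrightarrow> c \<le> n3 \<Longrightarrow> \<exists>i. inblock n1 n3 i c"
  using inblock_exists_upto[of n1 n1 c n3] Lsum_total[of n1 n3] two_le_n1 by auto

lemma inblock_column_range:
  assumes blk: "inblock n1 n3 i c"
  shows "1 \<le> c \<and> c \<le> n3"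
proof -
  have "Lsum n1 n3 (Suc i) \<le> Lsum n1 n3 (Suc n1)" using blk unfolding inblock_def by (intro Lsum_mono) simp
  then show ?thesis
    using blk Lsum_total[of n1 n3] Lsum_Suc[of i] two_le_n1 unfolding inblock_def by auto
qed

definition block_of :: "nat \<Rightarrow> nat" where
  "block_of c = (THE i. inblock n1 n3 i c)"

lemma inblock_block_of: "1 \<le> c \<Longrightarrow> c \<le> n3 \<Longrightarrow> inblock n1 n3 (block_of c) c"
  unfolding block_of_def using inblock_exists inblock_unique by (metis theI)

lemma block_of_eqI: "inblock n1 n3 i c \<Longrightarrow> block_of c = i"
  unfolding block_of_def using inblock_unique by blast

lemma block_of_range: "1 \<le> c \<Longrightarrow> c \<le> n3 \<Longrightarrow> 1 \<le> block_of c \<and> block_of c \<le> n1"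
  using inblock_block_of unfolding inblock_def by blast

definition block_pred :: "nat \<Rightarrow> nat" where
  "block_pred a = (if a = 1 then n1 else a - 1)"

lemma block_pred_range:
  "1 \<le> a \<Longrightarrow> a \<le> n1 \<Longrightarrow> 1 \<le> block_pred a \<and> block_pred a \<le> n1 \<and> block_pred a \<noteq> a"
  unfolding block_pred_def using two_le_n1 by auto

lemma succ1_range:
  "1 \<le> i \<Longrightarrow> i \<le> n1 \<Longrightarrow> 1 \<le> succ1 n1 i \<and> succ1 n1 i \<le> n1 \<and> succ1 n1 i \<noteq> i"
  unfolding succ1_def using two_le_n1 by auto

lemma succ1_eq_iff:
  "1 \<le> a \<Longrightarrow> a \<le> n1 \<Longrightarrow> 1 \<le> i \<Longrightarrow> i \<le> n1 \<Longrightarrow> succ1 n1 i = a \<longleftrightarrow> i = block_pred a"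
  unfolding succ1_def block_pred_def by auto

definition cone_landmarks :: "(nat \<Rightarrow> nat) \<Rightarrow> (nat \<Rightarrow> nat) \<Rightarrow> vtx set" where
  "cone_landmarks YL YR =
     (\<lambda>c. (block_of c, YL c, c)) ` {1..n3} \<union> (\<lambda>c. (succ1 n1 (block_of c), YR c, c)) ` {1..n3}"

lemma WLeft_eq: "WLeft n1 n2 n3 = (\<lambda>c. (block_of c, yL n1 n2 n3 c, c)) ` {1..n3}"
  unfolding WLeft_def using inblock_block_of block_of_eqI inblock_column_range by force

lemma WRight_eq: "WRight n1 n2 n3 = (\<lambda>c. (succ1 n1 (block_of c), yR n1 n2 n3 c, c)) ` {1..n3}"
  unfolding WRight_def using inblock_block_of block_of_eqI inblock_column_range by force

lemma WLeft_Un_WRight: "WLeft n1 n2 n3 \<union> WRight n1 n2 n3 = cone_landmarks (yL n1 n2 n3) (yR n1 n2 n3)"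
  unfolding WLeft_eq WRight_eq cone_landmarks_def ..

lemma relabel_left_landmark:
  assumes "(x, y, z) \<in> WLeft n1 n2 n3"
  shows "(WLeft n1 n2 n3 - {(x, y, z)}) \<union> {(x, y', z)} \<union> WRight n1 n2 n3
     = cone_landmarks ((yL n1 n2 n3)(z := y')) (yR n1 n2 n3)"
proof -
  let ?left = "\<lambda>Y c. (block_of c, Y c, c)"
  have z: "z \<in> {1..n3}" "x = block_of z" "y = yL n1 n2 n3 z" using assms unfolding WLeft_eq by auto
  have "WLeft n1 n2 n3 - {(x, y, z)} = ?left (yL n1 n2 n3) ` ({1..n3} - {z})"
    unfolding WLeft_eq z by auto
  moreover have "?left ((yL n1 n2 n3)(z := y')) ` {1..n3}
      = ?left (yL n1 n2 n3) ` ({1..n3} - {z}) \<union> {(x, y', z)}"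
    using z by auto
  ultimately show ?thesis unfolding WRight_eq cone_landmarks_def by simp
qed

abbreviation fibre :: "(nat \<Rightarrow> nat) \<Rightarrow> nat \<Rightarrow> nat set" where
  "fibre Y b \<equiv> {c \<in> {1..n3}. Y c = b}"

lemma finite_slice_cone_landmarks: "finite (slice (cone_landmarks YL YR) i a)"
  by (rule finite_subset[of _ "cone_landmarks YL YR"]) (auto simp: slice_def cone_landmarks_def)

lemma card_slice3_cone_landmarks:
  assumes "slice (cone_landmarks YL YR) 3 c \<noteq> {}"
  shows "card (slice (cone_landmarks YL YR) 3 c) = 2"
proof -
  have c: "1 \<le> c" "c \<le> n3" using assms unfolding slice_def cone_landmarks_def coord_def by auto
  then have "slice (cone_landmarks YL YR) 3 c = {(block_of c, YL c, c), (succ1 n1 (block_of c), YR c, c)}"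
    unfolding slice_def cone_landmarks_def coord_def by auto
  moreover have "block_of c \<noteq> succ1 n1 (block_of c)" using succ1_range block_of_range c by metis
  ultimately show ?thesis by simp
qed

lemma card_slice1_cone_landmarks:
  assumes "slice (cone_landmarks YL YR) 1 a \<noteq> {}"
  shows "el a + el (block_pred a) \<le> card (slice (cone_landmarks YL YR) 1 a)"
proof -
  let ?S = "slice (cone_landmarks YL YR) 1 a"
  let ?col = "\<lambda>w :: vtx. snd (snd w)"
  obtain c where "c \<in> {1..n3}" "block_of c = a \<or> succ1 n1 (block_of c) = a"
    using assms unfolding slice_def cone_landmarks_def coord_def by auto
  then have a: "1 \<le> a" "a \<le> n1" using succ1_range block_of_range by force+
  define p where "p = block_pred a"
  have p: "1 \<le> p" "p \<le> n1" "p \<noteq> a" using block_pred_range a p_def by auto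
  have left: "{L a<..L a + el a} \<subseteq> ?col ` ?S"
  proof
    fix c assume "c \<in> {L a<..L a + el a}"
    then have blk: "inblock n1 n3 a c" unfolding inblock_def using a by auto
    then have "(block_of c, YL c, c) \<in> ?S"
      using inblock_column_range[OF blk] block_of_eqI[OF blk] unfolding slice_def cone_landmarks_def coord_def by auto
    then show "c \<in> ?col ` ?S" by force
  qed
  have right: "{L p<..L p + el p} \<subseteq> ?col ` ?S"
  proof
    fix c assume "c \<in> {L p<..L p + el p}"
    then have blk: "inblock n1 n3 p c" unfolding inblock_def using p by auto
    then have "succ1 n1 (block_of c) = a" using block_of_eqI succ1_eq_iff p a p_def by auto
    then have "(succ1 n1 (block_of c), YR c, c) \<in> ?S"
      using inblock_column_range[OF blk] unfolding slice_def cone_landmarks_def coord_def by auto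
    then show "c \<in> ?col ` ?S" by force
  qed
  have "{L a<..L a + el a} \<inter> {L p<..L p + el p} = {}"
  proof (rule equals0I)
    fix c assume "c \<in> {L a<..L a + el a} \<inter> {L p<..L p + el p}"
    then have "inblock n1 n3 a c" "inblock n1 n3 p c" unfolding inblock_def using a p by auto
    then show False using inblock_unique p(3) by blast
  qed
  then have "el a + el p = card ({L a<..L a + el a} \<union> {L p<..L p + el p})"
    by (simp add: card_Un_disjoint)
  also have "\<dots> \<le> card (?col ` ?S)"
    using left right by (intro card_mono finite_imageI finite_slice_cone_landmarks) auto
  also have "\<dots> \<le> card ?S" by (rule card_image_le[OF finite_slice_cone_landmarks])
  finally show ?thesis unfolding p_def .
qed

lemma card_slice2_cone_landmarks: "card (slice (cone_landmarks YL YR) 2 b) = card (fibre YL b) + card (fibre YR b)"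
proof -
  let ?left = "\<lambda>c. (block_of c, b, c)" and ?right = "\<lambda>c. (succ1 n1 (block_of c), b, c)"
  have "slice (cone_landmarks YL YR) 2 b = ?left ` fibre YL b \<union> ?right ` fibre YR b"
    unfolding slice_def cone_landmarks_def coord_def by auto
  moreover have "?left ` fibre YL b \<inter> ?right ` fibre YR b = {}"
    using succ1_range block_of_range by force
  moreover have "inj_on ?left (fibre YL b)" "inj_on ?right (fibre YR b)" by (auto intro: inj_onI)
  ultimately show ?thesis by (simp add: card_Un_disjoint card_image)
qed

lemma valid_landmarks_coneI:
  assumes adjacent: "\<And>a. 1 \<le> a \<Longrightarrow> a \<le> n1 \<Longrightarrow> 3 \<le> el a + el (block_pred a)"
    and range: "\<And>c. 1 \<le> YL c \<and> YL c \<le> n2 \<and> 1 \<le> YR c \<and> YR c \<le> n2"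
    and fibres: "\<And>b c. c \<in> {1..n3} \<Longrightarrow> YL c = b \<or> YR c = b \<Longrightarrow>
      3 \<le> card (fibre YL b) + card (fibre YR b)"
  shows "valid_landmarks n1 n2 n3 (cone_landmarks YL YR)"
proof -
  have "cone_landmarks YL YR \<subseteq> vertices n1 n2 n3"
    unfolding cone_landmarks_def vertices_def using range block_of_range succ1_range by fastforce
  moreover have "(col = 3 \<longrightarrow> card e = 2) \<and> (col \<in> {1, 2} \<longrightarrow> finite e \<and> card e \<ge> 3)"
    if "(col, e) \<in> landmark_hyperedges (cone_landmarks YL YR)" for col e
  proof -
    from that obtain a where e: "e = slice (cone_landmarks YL YR) col a" "col \<in> {1, 2, 3}" "e \<noteq> {}"
      unfolding landmark_hyperedges_def by auto
    then consider "col = 1" | "col = 2" | "col = 3" by blast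
    then show ?thesis
    proof cases
      case 1
      obtain c where "c \<in> {1..n3}" "block_of c = a \<or> succ1 n1 (block_of c) = a"
        using e 1 unfolding slice_def cone_landmarks_def coord_def by auto
      then have "1 \<le> a" "a \<le> n1" using succ1_range block_of_range by force+
      then show ?thesis using 1 e adjacent card_slice1_cone_landmarks[of YL YR a] finite_slice_cone_landmarks by fastforce
    next
      case 2
      obtain c where "c \<in> {1..n3}" "YL c = a \<or> YR c = a"
        using e 2 unfolding slice_def cone_landmarks_def coord_def by auto
      then show ?thesis using 2 e fibres card_slice2_cone_landmarks finite_slice_cone_landmarks by simp
    next
      case 3
      then show ?thesis using e card_slice3_cone_landmarks by simp
    qed
  qed
  ultimately show ?thesis unfolding valid_landmarks_def by blast
qed

end

lemma rank_out_Suc: "rank_out X (Suc N) = rank_out X N + (if Suc N \<in> X then 0 else 1)"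
proof -
  have "{c \<in> {1..Suc N}. c \<notin> X} = {c \<in> {1..N}. c \<notin> X} \<union> (if Suc N \<in> X then {} else {Suc N})"
    by (auto simp: le_Suc_eq)
  then show ?thesis unfolding rank_out_def by (simp add: card_insert_if)
qed

lemma rank_out_empty: "rank_out {} c = c"
proof -
  have "{c' \<in> {1..c}. c' \<notin> {}} = {1..c}" by auto
  then show ?thesis unfolding rank_out_def by simp
qed

lemma rank_out_attained:
  "1 \<le> m \<Longrightarrow> m \<le> rank_out X N \<Longrightarrow> \<exists>c \<in> {1..N}. c \<notin> X \<and> rank_out X c = m"
proof (induction N)
  case 0
  then show ?case by (simp add: rank_out_def)
next
  case (Suc N)
  show ?case
  proof (cases "m \<le> rank_out X N")
    case True
    then show ?thesis using Suc by force
  next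
    case False
    then show ?thesis using Suc.prems rank_out_Suc[of X N] by (auto split: if_splits)
  qed
qed

lemma rank_out_lower: "finite X \<Longrightarrow> N - card X \<le> rank_out X N"
proof -
  assume "finite X"
  have "rank_out X N = card ({1..N} - X)" unfolding rank_out_def by (rule arg_cong[of _ _ card]) auto
  moreover have "card {1..N} - card X \<le> card ({1..N} - X)" by (rule diff_card_le_card_Diff) fact
  ultimately show ?thesis by simp
qed

lemma card_periodic_fibre:
  assumes "finite X" and "1 \<le> b" "b \<le> f" and "1 \<le> t" and "b + (t - 1) * f + card X \<le> N"
    and Y: "\<And>c. c \<notin> X \<Longrightarrow> Y c = off + (rank_out X c - 1) mod f + 1"
  shows "t \<le> card {c \<in> {1..N}. Y c = off + b}"
proof -
  let ?ranks = "(\<lambda>j. b + j * f) ` {..<t}"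
  let ?A = "{c \<in> {1..N}. c \<notin> X \<and> rank_out X c \<in> ?ranks}"
  have "inj_on (\<lambda>j. b + j * f) {..<t}" using assms(2,3) by (intro inj_onI) simp
  then have "t = card ?ranks" by (simp add: card_image)
  also have "?ranks \<subseteq> rank_out X ` ?A"
  proof
    fix m assume m: "m \<in> ?ranks"
    then obtain j where j: "j < t" "m = b + j * f" by auto
    then have "j * f \<le> (t - 1) * f" by (intro mult_le_mono1) simp
    then have "m \<le> rank_out X N" using j assms(5) rank_out_lower[OF assms(1), of N] by linarith
    moreover have "1 \<le> m" using j assms(2) by simp
    ultimately obtain c where "c \<in> {1..N}" "c \<notin> X" "rank_out X c = m"
      using rank_out_attained by blast
    then show "m \<in> rank_out X ` ?A" using m by (intro image_eqI[of _ _ c]) auto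
  qed
  then have "card ?ranks \<le> card (rank_out X ` ?A)" by (intro card_mono) auto
  also have "\<dots> \<le> card ?A" by (rule card_image_le) simp
  also have "?A \<subseteq> {c \<in> {1..N}. Y c = off + b}"
  proof
    fix c assume c: "c \<in> ?A"
    then obtain j where j: "rank_out X c = b + j * f" by auto
    have "rank_out X c - 1 = (b - 1) + j * f" using j assms(2) by simp
    moreover have "b - 1 < f" using assms(2,3) by simp
    then have "(b - 1 + j * f) mod f = b - 1" by (simp only: mod_mult_self1 mod_less)
    ultimately show "c \<in> {c \<in> {1..N}. Y c = off + b}" using Y[of c] c assms(2) by auto
  qed
  then have "card ?A \<le> card {c \<in> {1..N}. Y c = off + b}" by (intro card_mono) auto
  finally show ?thesis .
qed

locale middle_cone_setup =
  fixes n1 n2 n3 :: nat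
  assumes three_le_n1: "3 \<le> n1" and three_le_n2: "3 \<le> n2"
    and n1_le_n3: "n1 \<le> n3" and n2_le_n3: "n2 \<le> n3"
    and lower_bound: "3 * max n1 n2 \<le> 2 * n3" and upper_bound: "2 * n3 \<le> n1 * n2"
begin

sublocale block_partition n1 n3
  using three_le_n1 by unfold_locales simp

abbreviation "q \<equiv> n3 div n1"

lemma q_pos: "1 \<le> q"
  using three_le_n1 n1_le_n3 by (simp add: div_greater_zero_iff Suc_le_eq)

lemma ell_pos: "1 \<le> el i"
  using ell_bounds(1)[of n3 n1 i] q_pos by linarith

text \<open>For \<open>q = 1\<close> the bound \<open>3 n1 \<le> 2 n3\<close> amounts to \<open>n1 \<le> 2 r\<close>.\<close>
lemma ell_odd_eq_2:
  assumes "q = 1" and "odd i" and "i \<le> n1"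
  shows "el i = 2"
proof -
  have "n1 \<le> 2 * (n3 mod n1)"
    using lower_bound assms(1) div_mult_mod_eq[of n3 n1] by simp
  then show ?thesis using assms unfolding ell_def Let_def by auto
qed

lemma ell_adjacent_ge3:
  assumes "1 \<le> a" and "a \<le> n1"
  shows "3 \<le> el a + el (block_pred a)"
proof (cases "q = 1")
  case True
  show ?thesis
  proof (cases "odd a")
    case True
    then show ?thesis using ell_odd_eq_2[OF \<open>q = 1\<close>] assms ell_pos[of "block_pred a"] by simp
  next
    case False
    then have "block_pred a = a - 1" "odd (a - 1)" using assms unfolding block_pred_def by auto
    then show ?thesis using ell_odd_eq_2[OF \<open>q = 1\<close>, of "a - 1"] assms ell_pos[of a] by simp
  qed
next
  case False
  then show ?thesis using q_pos ell_bounds(1)[of n3 n1 a] ell_bounds(1)[of n3 n1 "block_pred a"] by simp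
qed

lemma valid_landmarks_even:
  assumes "even n2"
  shows "valid_landmarks n1 n2 n3 (cone_landmarks (yL n1 n2 n3) (yR n1 n2 n3))"
proof -
  define h where "h = n2 div 2"
  have h: "n2 = 2 * h" "1 \<le> h" "3 * h \<le> n3" using assms three_le_n2 lower_bound unfolding h_def by auto
  have yL: "yL n1 n2 n3 c = 0 + (rank_out {} c - 1) mod h + 1" for c
    unfolding yL_def h_def rank_out_empty using assms by simp
  have yR: "yR n1 n2 n3 c = h + (rank_out {} c - 1) mod h + 1" for c
    unfolding yR_def h_def rank_out_empty using assms by simp
  have mod_h: "(rank_out {} c - 1) mod h < h" for c using h by simp
  show ?thesis
  proof (rule valid_landmarks_coneI[OF ell_adjacent_ge3])
    fix c
    show "1 \<le> yL n1 n2 n3 c \<and> yL n1 n2 n3 c \<le> n2 \<and> 1 \<le> yR n1 n2 n3 c \<and> yR n1 n2 n3 c \<le> n2"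
      unfolding yL yR using mod_h[of c] h(1) by (intro conjI; linarith)
  next
    fix b c assume "yL n1 n2 n3 c = b \<or> yR n1 n2 n3 c = b"
    then show "3 \<le> card (fibre (yL n1 n2 n3) b) + card (fibre (yR n1 n2 n3) b)"
    proof
      assume "yL n1 n2 n3 c = b"
      then have b: "b = 0 + ((rank_out {} c - 1) mod h + 1)" unfolding yL by simp
      have "3 \<le> card (fibre (yL n1 n2 n3) (0 + ((rank_out {} c - 1) mod h + 1)))"
        by (rule card_periodic_fibre[where X = "{}" and f = h]) (use h mod_h[of c] yL in auto)
      then show ?thesis unfolding b by simp
    next
      assume "yR n1 n2 n3 c = b"
      then have b: "b = h + ((rank_out {} c - 1) mod h + 1)" unfolding yR by simp
      have "3 \<le> card (fibre (yR n1 n2 n3) (h + ((rank_out {} c - 1) mod h + 1)))"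
        by (rule card_periodic_fibre[where X = "{}" and f = h]) (use h mod_h[of c] yR in auto)
      then show ?thesis unfolding b by simp
    qed
  qed
qed

abbreviation "f \<equiv> fpar n2"
abbreviation "S \<equiv> Sneutral n1 n2 n3"

lemma odd_params:
  assumes "odd n2"
  shows "n2 = 2 * f + 1" "1 \<le> f" "3 * f + 2 \<le> n3" "4 \<le> n1" "q \<le> f"
proof -
  show n2: "n2 = 2 * f + 1" using assms unfolding fpar_def by (auto elim!: oddE)
  then show "1 \<le> f" using three_le_n2 by simp
  show "3 * f + 2 \<le> n3" using n2 lower_bound by simp
  show "4 \<le> n1"
  proof (rule ccontr)
    assume "\<not> 4 \<le> n1"
    then have "n1 = 3" using three_le_n1 by simp
    then have "2 * n3 = 3 * n2" using three_le_n2 lower_bound upper_bound by simp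
    then show False using n2 by presburger
  qed
  have "n1 * (2 * q) \<le> 2 * n3" by (simp add: div_times_less_eq_dividend mult.commute)
  also have "\<dots> \<le> n1 * (2 * f + 1)" using upper_bound n2 by simp
  finally have "2 * q \<le> 2 * f + 1" using three_le_n1 by (subst (asm) mult_le_cancel1) simp
  then show "q \<le> f" by simp
qed

lemma finite_Sneutral: "finite S"
  unfolding Sneutral_def by auto

lemma yL_odd: "odd n2 \<Longrightarrow> yL n1 n2 n3 c = (if c \<in> S then n2 else 0 + (rank_out S c - 1) mod f + 1)"
  unfolding yL_def by (simp add: Let_def)

lemma yR_odd:
  "odd n2 \<Longrightarrow> yR n1 n2 n3 c =
     (if c \<in> (\<lambda>s. s + 1) ` S then n2 else f + (rank_out ((\<lambda>s. s + 1) ` S) c - 1) mod f + 1)"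
  unfolding yR_def by (simp add: Let_def)

lemma yL_odd_cases:
  assumes "odd n2"
  shows "yL n1 n2 n3 c = n2 \<or> yL n1 n2 n3 c \<in> {1..f}"
proof -
  have "(rank_out S c - 1) mod f < f" using odd_params(2)[OF assms] by simp
  then show ?thesis using yL_odd[OF assms, of c] by auto
qed

lemma yR_odd_cases:
  assumes "odd n2"
  shows "yR n1 n2 n3 c = n2 \<or> yR n1 n2 n3 c \<in> {f + 1..2 * f}"
proof -
  have "(rank_out ((\<lambda>s. s + 1) ` S) c - 1) mod f < f" using odd_params(2)[OF assms] by simp
  then show ?thesis using yR_odd[OF assms, of c] by auto
qed

lemma card_fibre_yL_odd:
  assumes "odd n2" and "b \<in> {1..f}" and "1 \<le> t" and "b + (t - 1) * f + card S \<le> n3"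
  shows "t \<le> card (fibre (yL n1 n2 n3) b)"
proof -
  have "t \<le> card (fibre (yL n1 n2 n3) (0 + b))"
    by (rule card_periodic_fibre[where X = S]) (use assms finite_Sneutral yL_odd[OF assms(1)] in auto)
  then show ?thesis by simp
qed

lemma card_fibre_yR_odd:
  assumes "odd n2" and "b \<in> {f + 1..2 * f}" and "3 * f + card S \<le> n3"
  shows "3 \<le> card (fibre (yR n1 n2 n3) b)"
proof -
  have "card ((\<lambda>s. s + 1) ` S) \<le> card S" by (rule card_image_le[OF finite_Sneutral])
  then have "3 \<le> card (fibre (yR n1 n2 n3) (f + (b - f)))"
    by (intro card_periodic_fibre[where X = "(\<lambda>s. s + 1) ` S"])
      (use assms finite_Sneutral yR_odd[OF assms(1)] in auto)
  then show ?thesis using assms(2) by simp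
qed

lemma valid_landmarks_cone_oddI:
  assumes "odd n2"
    and YL: "\<And>c. YL c = n2 \<or> YL c \<in> {1..f}" and YR: "\<And>c. YR c = n2 \<or> YR c \<in> {f + 1..2 * f}"
    and left: "\<And>b. b \<in> {1..f} \<Longrightarrow> 3 \<le> card (fibre YL b)"
    and right: "\<And>b. b \<in> {f + 1..2 * f} \<Longrightarrow> 3 \<le> card (fibre YR b)"
    and neutral: "2 \<le> card (fibre YL n2)" "1 \<le> card (fibre YR n2)"
  shows "valid_landmarks n1 n2 n3 (cone_landmarks YL YR)"
proof (rule valid_landmarks_coneI[OF ell_adjacent_ge3])
  fix c
  show "1 \<le> YL c \<and> YL c \<le> n2 \<and> 1 \<le> YR c \<and> YR c \<le> n2"
    using YL[of c] YR[of c] odd_params[OF assms(1)] by auto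
next
  fix b c assume c: "YL c = b \<or> YR c = b"
  consider "b = n2" | "YL c = b" "b \<noteq> n2" | "YR c = b" "b \<noteq> n2" using c by blast
  then show "3 \<le> card (fibre YL b) + card (fibre YR b)"
  proof cases
    case 1
    then show ?thesis using neutral by simp
  next
    case 2
    then show ?thesis using YL[of c] left[of b] by simp
  next
    case 3
    then show ?thesis using YR[of c] right[of b] by simp
  qed
qed

definition long_blocks :: "nat set" where
  "long_blocks = {i \<in> {1..n1}. f < el i}"

lemma kcount_eq: "kcount n1 n2 n3 = card long_blocks"
  unfolding kcount_def long_blocks_def ..

lemma finite_long_blocks: "finite long_blocks"
  unfolding long_blocks_def by simp

lemma card_long_blocks_bound:
  assumes "long_blocks \<noteq> {}"
  shows "card long_blocks + 3 * f \<le> n3"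
proof -
  obtain i where "i \<in> long_blocks" using assms by blast
  then have "f \<le> q" using ell_bounds(2)[of n1 n3 i] unfolding long_blocks_def by simp
  then have "(\<Sum>i\<in>{1..n1}. f + (if i \<in> long_blocks then 1 else 0)) \<le> (\<Sum>i\<in>{1..n1}. el i)"
  proof (intro sum_mono)
    fix i
    show "f + (if i \<in> long_blocks then 1 else 0) \<le> el i"
      using \<open>f \<le> q\<close> ell_bounds(1)[of n3 n1 i] unfolding long_blocks_def by auto
  qed
  also have "\<dots> = n3"
    using Lsum_total[of n1 n3] three_le_n1 unfolding Lsum_def by (simp add: atLeastLessThanSuc_atLeastAtMost)
  moreover have "{1..n1} \<inter> long_blocks = long_blocks" unfolding long_blocks_def by auto
  ultimately have "n1 * f + card long_blocks \<le> n3" by (simp add: sum.distrib sum.If_cases)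
  moreover have "3 * f \<le> n1 * f" using three_le_n1 by simp
  ultimately show ?thesis by linarith
qed

lemma inj_on_sstart: "inj_on (sstart n1 n3) {1..n1}"
proof -
  have "L i < L j" if "1 \<le> i" "i < j" for i j
    using Lsum_Suc[of i n1 n3] Lsum_mono[of "Suc i" j n1 n3] ell_pos[of i] that by simp
  then show ?thesis unfolding sstart_def by (intro inj_onI) (metis add_right_cancel nat_neq_iff atLeastAtMost_iff)
qed

lemma sstart_long_block_le:
  assumes "odd n2" and "i \<in> long_blocks"
  shows "sstart n1 n3 i + 1 \<le> n3"
proof -
  have "1 \<le> i" "i \<le> n1" "f < el i" using assms(2) unfolding long_blocks_def by auto
  then show ?thesis
    using Lsum_Suc[of i n1 n3] Lsum_mono[of "Suc i" "Suc n1" n1 n3] Lsum_total[of n1 n3] three_le_n1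
      odd_params(2)[OF assms(1)] unfolding sstart_def by simp
qed

lemma valid_landmarks_many_long:
  assumes "odd n2" and "2 \<le> kcount n1 n2 n3"
  shows "valid_landmarks n1 n2 n3 (cone_landmarks (yL n1 n2 n3) (yR n1 n2 n3))"
proof -
  have S: "S = sstart n1 n3 ` long_blocks"
    using assms(2) unfolding Sneutral_def long_blocks_def by auto
  obtain i j where ij: "i \<in> long_blocks" "j \<in> long_blocks" "i \<noteq> j"
    using assms(2) card_le_Suc0_iff_eq[OF finite_long_blocks] unfolding kcount_eq by fastforce
  have le: "sstart n1 n3 i + 1 \<le> n3" "sstart n1 n3 j + 1 \<le> n3"
    using sstart_long_block_le[OF assms(1)] ij by auto
  have "sstart n1 n3 i \<noteq> sstart n1 n3 j"
    using inj_on_sstart ij unfolding long_blocks_def by (auto dest: inj_onD)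
  moreover have "{sstart n1 n3 i, sstart n1 n3 j} \<subseteq> fibre (yL n1 n2 n3) n2"
    using ij S le yL_odd[OF assms(1)] by (auto simp: sstart_def)
  then have "card {sstart n1 n3 i, sstart n1 n3 j} \<le> card (fibre (yL n1 n2 n3) n2)"
    by (intro card_mono) auto
  ultimately have left_n2: "2 \<le> card (fibre (yL n1 n2 n3) n2)" by simp
  have "sstart n1 n3 i + 1 \<in> fibre (yR n1 n2 n3) n2"
    using ij S le yR_odd[OF assms(1)] by (auto simp: sstart_def)
  then have "fibre (yR n1 n2 n3) n2 \<noteq> {}" by blast
  then have right_n2: "1 \<le> card (fibre (yR n1 n2 n3) n2)" by (simp add: Suc_le_eq card_gt_0_iff)
  have "card S \<le> card long_blocks" unfolding S by (rule card_image_le[OF finite_long_blocks])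
  moreover have "card long_blocks + 3 * f \<le> n3" using ij(1) by (intro card_long_blocks_bound) blast
  ultimately have bound: "3 * f + card S \<le> n3" by linarith
  show ?thesis
  proof (rule valid_landmarks_cone_oddI[OF assms(1) yL_odd_cases[OF assms(1)] yR_odd_cases[OF assms(1)]
        _ card_fibre_yR_odd[OF assms(1) _ bound] left_n2 right_n2])
    fix b assume "b \<in> {1..f}"
    then show "3 \<le> card (fibre (yL n1 n2 n3) b)"
      using bound by (intro card_fibre_yL_odd[OF assms(1)]) auto
  qed
qed

lemma Sneutral_few_long: "kcount n1 n2 n3 \<le> 1 \<Longrightarrow> S = {1}"
  unfolding Sneutral_def by simp

lemma two_le_f_few_long:
  assumes "odd n2" and "kcount n1 n2 n3 \<le> 1"
  shows "2 \<le> f"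
proof (rule ccontr)
  assume "\<not> 2 \<le> f"
  then have "f = 1" using odd_params(2)[OF assms(1)] by simp
  then have "q = 1" using odd_params(5)[OF assms(1)] q_pos by simp
  then have "{1, 3} \<subseteq> long_blocks"
    using ell_odd_eq_2 three_le_n1 \<open>f = 1\<close> unfolding long_blocks_def by auto
  then have "card {1, 3 :: nat} \<le> card long_blocks" by (rule card_mono[OF finite_long_blocks])
  then show False using assms(2) kcount_eq by simp
qed

lemma Lsum_3_le_few_long:
  assumes "odd n2" and "kcount n1 n2 n3 \<le> 1"
  shows "L 3 \<le> 2 * f + 1"
proof -
  have "{1..<3} = {1, 2 :: nat}" by auto
  then have L3: "L 3 = el 1 + el 2" unfolding Lsum_def by simp
  have "\<not> {1, 2} \<subseteq> long_blocks"
  proof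
    assume "{1, 2} \<subseteq> long_blocks"
    then have "card {1, 2 :: nat} \<le> card long_blocks" by (rule card_mono[OF finite_long_blocks])
    then show False using assms(2) kcount_eq by simp
  qed
  then have "el 1 \<le> f \<or> el 2 \<le> f" using three_le_n1 unfolding long_blocks_def by auto
  then show ?thesis
    using L3 ell_bounds(2)[of n1 n3 1] ell_bounds(2)[of n1 n3 2] odd_params(5)[OF assms(1)] by linarith
qed

lemma Lsum_last_ge_few_long:
  assumes "odd n2" and "kcount n1 n2 n3 \<le> 1"
  shows "2 * f + 2 \<le> L n1"
proof (cases "q < f")
  case True
  have "L n1 + el n1 = n3" using Lsum_Suc[of n1 n1 n3] Lsum_total[of n1 n3] three_le_n1 by simp
  then show ?thesis using True odd_params(3)[OF assms(1)] ell_bounds(2)[of n1 n3 n1] by linarith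
next
  case False
  then have "q = f" using odd_params(5)[OF assms(1)] by simp
  have "(n1 - 1) * q = (\<Sum>i\<in>{1..<n1}. q)" by simp
  also have "\<dots> \<le> L n1" unfolding Lsum_def by (intro sum_mono ell_bounds(1))
  finally have "(n1 - 1) * f \<le> L n1" using \<open>q = f\<close> by simp
  moreover have "3 * f \<le> (n1 - 1) * f" using odd_params(4)[OF assms(1)] by (intro mult_le_mono1) simp
  ultimately show ?thesis using two_le_f_few_long[OF assms] by linarith
qed

lemma modifiable_column:
  assumes "odd n2" and "kcount n1 n2 n3 \<le> 1"
  shows "2 * f + 2 \<in> {1..n3}" "yL n1 n2 n3 (2 * f + 2) = 1" "block_of (2 * f + 2) \<notin> {1, 2, n1}"
proof -
  define z where "z = 2 * f + 2"
  show z: "2 * f + 2 \<in> {1..n3}" using odd_params(3)[OF assms(1)] by simp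
  have "{c \<in> {1..z}. c \<notin> {1}} = {2..z}" by auto
  then have "rank_out S z - 1 = 0 + 2 * f"
    using Sneutral_few_long[OF assms(2)] unfolding rank_out_def z_def by simp
  then show "yL n1 n2 n3 (2 * f + 2) = 1"
    using yL_odd[OF assms(1)] Sneutral_few_long[OF assms(2)] unfolding z_def by simp
  have blk: "inblock n1 n3 (block_of z) z" using z inblock_block_of unfolding z_def by simp
  have "block_of z \<notin> {1, 2}"
  proof
    assume "block_of z \<in> {1, 2}"
    then have "L (Suc (block_of z)) \<le> L 3" by (intro Lsum_mono) auto
    then show False
      using blk Lsum_Suc[of "block_of z" n1 n3] Lsum_3_le_few_long[OF assms]
      unfolding inblock_def z_def by simp
  qed
  moreover have "block_of z \<noteq> n1" using blk Lsum_last_ge_few_long[OF assms] unfolding inblock_def z_def by auto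
  ultimately show "block_of (2 * f + 2) \<notin> {1, 2, n1}" unfolding z_def by simp
qed

lemma valid_landmarks_few_long:
  assumes "odd n2" and "kcount n1 n2 n3 \<le> 1" and z: "z \<in> {1..n3}" "yL n1 n2 n3 z = 1"
  shows "valid_landmarks n1 n2 n3 (cone_landmarks ((yL n1 n2 n3)(z := n2)) (yR n1 n2 n3))"
proof -
  let ?YL = "(yL n1 n2 n3)(z := n2)"
  note params = odd_params[OF assms(1)]
  have S: "S = {1}" by (rule Sneutral_few_long[OF assms(2)])
  have bound: "3 * f + card S \<le> n3" using S params(3) by simp
  have left: "3 \<le> card (fibre ?YL b)" if b: "b \<in> {1..f}" for b
  proof -
    have "fibre ?YL b = fibre (yL n1 n2 n3) b - {z}" using b params(1) by auto
    moreover have "3 + (if b = 1 then 1 else 0) \<le> card (fibre (yL n1 n2 n3) b)"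
      using b S params(3) by (intro card_fibre_yL_odd[OF assms(1)]) auto
    moreover have "z \<in> fibre (yL n1 n2 n3) b \<longleftrightarrow> b = 1" using z by auto
    ultimately show ?thesis by (cases "b = 1") (simp_all add: card_Diff_singleton)
  qed
  have "yL n1 n2 n3 1 = n2" using yL_odd[OF assms(1)] S by simp
  then have "{1, z} \<subseteq> fibre ?YL n2" "1 \<noteq> z" using z three_le_n2 n2_le_n3 by auto
  then have left_n2: "2 \<le> card (fibre ?YL n2)" using card_mono[of "fibre ?YL n2" "{1, z}"] by simp
  have "2 \<in> fibre (yR n1 n2 n3) n2" using yR_odd[OF assms(1)] S three_le_n2 n2_le_n3 by auto
  then have "fibre (yR n1 n2 n3) n2 \<noteq> {}" by blast
  then have right_n2: "1 \<le> card (fibre (yR n1 n2 n3) n2)" by (simp add: Suc_le_eq card_gt_0_iff)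
  have "?YL c = n2 \<or> ?YL c \<in> {1..f}" for c using yL_odd_cases[OF assms(1), of c] by auto
  then show ?thesis
    using valid_landmarks_cone_oddI[OF assms(1) _ yR_odd_cases[OF assms(1)] left
        card_fibre_yR_odd[OF assms(1) _ bound] left_n2 right_n2] by blast
qed


lemma modifiable_left_landmark_exists:
  assumes "odd n2" and "kcount n1 n2 n3 \<le> 1"
  shows "\<exists>x z. (x, 1, z) \<in> WLeft n1 n2 n3 \<and> x \<notin> {1, 2, n1}"
proof -
  let ?z = "2 * f + 2"
  have "(block_of ?z, yL n1 n2 n3 ?z, ?z) \<in> WLeft n1 n2 n3"
    unfolding WLeft_eq using modifiable_column(1)[OF assms] by blast
  then show ?thesis using modifiable_column(2,3)[OF assms] by auto
qed

lemma valid_landmarks_middle_cone: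
  assumes "middle_cone n1 n2 n3 W"
  shows "valid_landmarks n1 n2 n3 W"
  using assms unfolding middle_cone_def
proof (elim disjE exE conjE)
  assume "even n2" "W = WLeft n1 n2 n3 \<union> WRight n1 n2 n3"
  then show ?thesis using valid_landmarks_even WLeft_Un_WRight by simp
next
  assume "odd n2" "2 \<le> kcount n1 n2 n3" "W = WLeft n1 n2 n3 \<union> WRight n1 n2 n3"
  then show ?thesis using valid_landmarks_many_long WLeft_Un_WRight by simp
next
  fix x z
  assume "odd n2" "kcount n1 n2 n3 \<le> 1" and z: "(x, 1, z) \<in> WLeft n1 n2 n3"
    and "W = (WLeft n1 n2 n3 - {(x, 1, z)}) \<union> {(x, n2, z)} \<union> WRight n1 n2 n3"
  moreover have "z \<in> {1..n3}" "yL n1 n2 n3 z = 1" using z unfolding WLeft_eq by auto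
  ultimately show ?thesis using valid_landmarks_few_long relabel_left_landmark[OF z] by simp
qed

end

theorem mainTheorem6:
  fixes n1 n2 n3 :: nat
  assumes "3 \<le> n1" and "3 \<le> n2" and "n1 \<le> n3" and "n2 \<le> n3"
    and "3 * max n1 n2 \<le> 2 * n3" and "2 * n3 \<le> n1 * n2"
  shows "(odd n2 \<and> kcount n1 n2 n3 \<le> 1 \<longrightarrow>
            (\<exists>x z. (x, 1, z) \<in> WLeft n1 n2 n3 \<and> x \<notin> {1, 2, n1}))
       \<and> (\<forall>W. middle_cone n1 n2 n3 W \<longrightarrow>
            W \<subseteq> vertices n1 n2 n3 \<and>
            (\<forall>(col, e) \<in> landmark_hyperedges W.
               (col = 3 \<longrightarrow> card e = 2) \<and>
               (col \<in> {1, 2} \<longrightarrow> finite e \<and> card e \<ge> 3)))"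
proof -
  interpret middle_cone_setup n1 n2 n3 using assms by unfold_locales
  show ?thesis
    using modifiable_left_landmark_exists valid_landmarks_middle_cone
    unfolding valid_landmarks_def[symmetric] by blast
qed

end
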